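(* Let $G$ be a compact Lie group with normalized Haar measure $dg$, and let $k\geq 2$. Let $\sigma_1,\ldots,\sigma_k$ and $\alpha_1,\ldots,\alpha_k$ be finite-dimensional unitary representations of $G$, and for each pair $1\leq i<j\leq k$ let $\rho_{ij}$ be a finite-dimensional unitary representation of $G$. Define the linear operator $$\Phi\colon V_{\sigma_1}\otimes\cdots\otimes V_{\sigma_k}\to V_{\sigma_1}\otimes\cdots\otimes V_{\sigma_k},$$ $$\Phi:=\int_{G^k}\Bigl(\prod_{i=1}^k\chi_{\alpha_i}(g_i)\Bigr)\Bigl(\prod_{1\leq i<j\leq k}\chi_{\rho_{ij}}(g_i g_j^{-1})\Bigr)\,\sigma_1(g_1)\otimes\cdots\otimes\sigma_k(g_k)\,dg_1\cdots dg_k .$$ Then $\Phi$ is a positive operator, i.e. $\langle v,\Phi v\rangle\geq 0$ for all $v\in V_{\sigma_1}\otimes\cdots\otimes V_{\sigma_k}$ (with respect to the tensor product of the $G$-invariant scalar products).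
   Context: For a finite-dimensional representation $\rho\colon G\to\mathrm{Aut}(V_\rho)$, $\chi_\rho(g)=\mathrm{tr}\,\rho(g)$ denotes its character. Each representation space carries a $G$-invariant Hermitian scalar product making the representation unitary. An operator $A$ on a Hilbert space is positive if $\langle v,Av\rangle\geq 0$ for all $v$. (Diagrammatically, $\Phi$ consists of $k$ Haar intertwiners $\int_G\rho_1(g)\otimes\cdots\otimes\rho_r(g)\,dg$, each with one external line $\sigma_i$, one closed loop $\alpha_i$ through it alone, and for each pair $i<j$ one closed loop $\rho_{ij}$ passing through intertwiner $i$ as $\rho_{ij}$ and through intertwiner $j$ as the dual representation.) *)

theory Defs
  imports "HOL-Analysis.Analysis" "HOL-Probability.Probability"
begin

definition compact_matrix_group :: "(complex^'n^'n) set \<Rightarrow> bool" where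
  "compact_matrix_group G \<longleftrightarrow> compact G \<and> mat 1 \<in> G \<and>
     (\<forall>g\<in>G. \<forall>h\<in>G. g ** h \<in> G) \<and>
     (\<forall>g\<in>G. invertible g \<and> matrix_inv g \<in> G)"

text \<open>Normalized Haar measure on G (a Borel probability measure on G, invariant under
left and right translations; on a compact group the normalized Haar measure is bi-invariant).\<close>
definition haar_measure :: "(complex^'n^'n) set \<Rightarrow> (complex^'n^'n) measure \<Rightarrow> bool" where
  "haar_measure G \<mu> \<longleftrightarrow> space \<mu> = G \<and> sets \<mu> = sets (restrict_space borel G) \<and>
     emeasure \<mu> G = 1 \<and>
     (\<forall>g\<in>G. distr \<mu> \<mu> (\<lambda>x. g ** x) = \<mu> \<and> distr \<mu> \<mu> (\<lambda>x. x ** g) = \<mu>)"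

text \<open>A finite-dimensional unitary representation of G of dimension d, given in an
orthonormal basis of its representation space as a matrix-valued function
(only the entries with indices < d are meaningful): continuous homomorphism into U(d).\<close>
definition unitary_rep :: "(complex^'n^'n) set \<Rightarrow> nat \<Rightarrow> (complex^'n^'n \<Rightarrow> nat \<Rightarrow> nat \<Rightarrow> complex) \<Rightarrow> bool" where
  "unitary_rep G d \<rho> \<longleftrightarrow>
     (\<forall>a<d. \<forall>b<d. continuous_on G (\<lambda>g. \<rho> g a b)) \<and>
     (\<forall>g\<in>G. \<forall>h\<in>G. \<forall>a<d. \<forall>b<d. \<rho> (g ** h) a b = (\<Sum>c<d. \<rho> g a c * \<rho> h c b)) \<and>
     (\<forall>a<d. \<forall>b<d. \<rho> (mat 1) a b = (if a = b then 1 else 0)) \<and>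
     (\<forall>g\<in>G. \<forall>a<d. \<forall>b<d. (\<Sum>c<d. cnj (\<rho> g c a) * \<rho> g c b) = (if a = b then 1 else 0))"

definition character :: "nat \<Rightarrow> (complex^'n^'n \<Rightarrow> nat \<Rightarrow> nat \<Rightarrow> complex) \<Rightarrow> complex^'n^'n \<Rightarrow> complex" where
  "character d \<rho> g = (\<Sum>a<d. \<rho> g a a)"

definition tensor_indices :: "nat \<Rightarrow> (nat \<Rightarrow> nat) \<Rightarrow> (nat \<Rightarrow> nat) set" where
  "tensor_indices k d = PiE {..<k} (\<lambda>i. {..<d i})"

definition Phi_entry ::
  "(complex^'n^'n) measure \<Rightarrow> nat \<Rightarrow>
   (nat \<Rightarrow> nat) \<Rightarrow> (nat \<Rightarrow> complex^'n^'n \<Rightarrow> nat \<Rightarrow> nat \<Rightarrow> complex) \<Rightarrow>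
   (nat \<Rightarrow> nat) \<Rightarrow> (nat \<Rightarrow> complex^'n^'n \<Rightarrow> nat \<Rightarrow> nat \<Rightarrow> complex) \<Rightarrow>
   (nat \<Rightarrow> nat \<Rightarrow> nat) \<Rightarrow> (nat \<Rightarrow> nat \<Rightarrow> complex^'n^'n \<Rightarrow> nat \<Rightarrow> nat \<Rightarrow> complex) \<Rightarrow>
   (nat \<Rightarrow> nat) \<Rightarrow> (nat \<Rightarrow> nat) \<Rightarrow> complex" where
  "Phi_entry \<mu> k d\<sigma> \<sigma> d\<alpha> \<alpha> d\<rho> \<rho> a b =
     integral\<^sup>L (PiM {..<k} (\<lambda>_. \<mu>))
       (\<lambda>g. (\<Prod>i<k. character (d\<alpha> i) (\<alpha> i) (g i)) *
            (\<Prod>(i,j)\<in>{(i,j). i < j \<and> j < k}. character (d\<rho> i j) (\<rho> i j) (g i ** matrix_inv (g j))) *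
            (\<Prod>i<k. \<sigma> i (g i) (a i) (b i)))"

end

theory Submission
  imports Defs "HOL-Library.Complex_Order"
begin

(* Write the quadratic form of Phi as the integral over G^k of F g = w g * <v, sigma(g) v>, where
   w is the product of characters and sigma = sigma_1 (x) ... (x) sigma_k.  Componentwise left
   translation by h in G^k preserves the product Haar measure, so the integral equals the double
   integral of F (h^-1 g) over h and g.  Unitarity gives pi(h^-1 g) = pi(h)^* pi(g), whence
     chi_alpha (h_i^-1 g_i) = sum_pq cnj (alpha(h_i)_pq) alpha(g_i)_pq,
     chi_rho ((h_i^-1 g_i) (h_j^-1 g_j)^-1) = sum_pq cnj (rho(h_i h_j^-1)_pq) rho(g_i g_j^-1)_pq,
     <v, sigma(h^-1 g) v> = <sigma(h) v, sigma(g) v>.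
   Thus F (h^-1 g) is a Gram kernel sum_x cnj (u_x h) u_x g of finite rank with bounded measurable
   u_x, and its double integral is sum_x |integral u_x|^2 >= 0. *)

lemma trace_adjoint_products:
  fixes X Y Z W :: "nat \<Rightarrow> nat \<Rightarrow> complex"
  shows "(\<Sum>a<d. \<Sum>c<d. (\<Sum>p<d. cnj (X p a) * Y p c) * cnj (\<Sum>q<d. cnj (Z q a) * W q c))
   = (\<Sum>(p,q)\<in>{..<d}\<times>{..<d}. cnj (\<Sum>a<d. X p a * cnj (Z q a)) * (\<Sum>c<d. Y p c * cnj (W q c)))"
proof -
  let ?T = "\<lambda>a c p q. cnj (X p a) * Z q a * (Y p c * cnj (W q c))"
  have "(\<Sum>a<d. \<Sum>c<d. (\<Sum>p<d. cnj (X p a) * Y p c) * cnj (\<Sum>q<d. cnj (Z q a) * W q c))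
      = (\<Sum>a<d. \<Sum>c<d. \<Sum>q<d. \<Sum>p<d. ?T a c p q)"
    by (simp add: sum_distrib_left sum_distrib_right cnj_sum mult_ac)
  also have "\<dots> = (\<Sum>p<d. \<Sum>q<d. \<Sum>a<d. \<Sum>c<d. ?T a c p q)"
    by (simp add: sum.cartesian_product)
       (rule sum.reindex_bij_witness[of _ "\<lambda>(p,q,a,c). (a,c,q,p)" "\<lambda>(a,c,q,p). (p,q,a,c)"]; auto)
  also have "\<dots> = (\<Sum>p<d. \<Sum>q<d. cnj (\<Sum>a<d. X p a * cnj (Z q a)) * (\<Sum>c<d. Y p c * cnj (W q c)))"
    by (simp add: sum_distrib_left sum_distrib_right cnj_sum mult_ac)
  also have "\<dots> = (\<Sum>(p,q)\<in>{..<d}\<times>{..<d}. cnj (\<Sum>a<d. X p a * cnj (Z q a)) * (\<Sum>c<d. Y p c * cnj (W q c)))"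
    by (simp add: sum.cartesian_product)
  finally show ?thesis .
qed

lemma prod_sum_cnj_mult_PiE:
  assumes "finite I" "\<And>i. i \<in> I \<Longrightarrow> finite (X i)"
  shows "(\<Prod>i\<in>I. \<Sum>x\<in>X i. cnj (u i x) * w i x)
       = (\<Sum>f\<in>PiE I X. cnj (\<Prod>i\<in>I. u i (f i)) * (\<Prod>i\<in>I. w i (f i)))"
  by (simp add: prod_sum_PiE[OF assms] prod.distrib cnj_prod)

lemma quadratic_form_adjoint_mult:
  fixes v :: "'a \<Rightarrow> complex"
  shows "(\<Sum>a\<in>A. \<Sum>b\<in>A. cnj (v a) * (\<Sum>c\<in>C. cnj (P c a) * Q c b) * v b)
       = (\<Sum>c\<in>C. cnj (\<Sum>a\<in>A. P c a * v a) * (\<Sum>b\<in>A. Q c b * v b))"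
proof -
  have "(\<Sum>a\<in>A. \<Sum>b\<in>A. cnj (v a) * (\<Sum>c\<in>C. cnj (P c a) * Q c b) * v b)
      = (\<Sum>a\<in>A. \<Sum>b\<in>A. \<Sum>c\<in>C. cnj (P c a * v a) * (Q c b * v b))"
    by (simp add: sum_distrib_left sum_distrib_right mult_ac)
  also have "\<dots> = (\<Sum>c\<in>C. \<Sum>a\<in>A. \<Sum>b\<in>A. cnj (P c a * v a) * (Q c b * v b))"
    by (simp add: sum.swap[of _ C])
  also have "\<dots> = (\<Sum>c\<in>C. cnj (\<Sum>a\<in>A. P c a * v a) * (\<Sum>b\<in>A. Q c b * v b))"
    by (simp add: sum_distrib_left sum_distrib_right cnj_sum) (rule sum.cong[OF refl], rule sum.swap)
  finally show ?thesis .
qed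

section \<open>Unitary representations of compact matrix groups\<close>

lemma matrix_mul_matrix_inv:
  fixes A :: "'a::semiring_1^'n^'m"
  assumes "invertible A"
  shows "A ** matrix_inv A = mat 1"
  using assms unfolding invertible_def matrix_inv_def by (rule someI2_ex) auto

lemma compact_matrix_group_mult: "compact_matrix_group G \<Longrightarrow> g \<in> G \<Longrightarrow> h \<in> G \<Longrightarrow> g ** h \<in> G"
  unfolding compact_matrix_group_def by blast

lemma compact_matrix_group_matrix_inv: "compact_matrix_group G \<Longrightarrow> g \<in> G \<Longrightarrow> matrix_inv g \<in> G"
  unfolding compact_matrix_group_def by blast

lemma compact_matrix_group_invertible: "compact_matrix_group G \<Longrightarrow> g \<in> G \<Longrightarrow> invertible g"
  unfolding compact_matrix_group_def by blast

lemma unitary_rep_mult: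
  "unitary_rep G d \<pi> \<Longrightarrow> g \<in> G \<Longrightarrow> h \<in> G \<Longrightarrow> a < d \<Longrightarrow> b < d \<Longrightarrow>
    \<pi> (g ** h) a b = (\<Sum>c<d. \<pi> g a c * \<pi> h c b)"
  unfolding unitary_rep_def by blast

lemma unitary_rep_matrix_inv:
  assumes G: "compact_matrix_group G" and \<pi>: "unitary_rep G d \<pi>" and g: "g \<in> G"
    and a: "a < d" and b: "b < d"
  shows "\<pi> (matrix_inv g) a b = cnj (\<pi> g b a)"
proof -
  let ?g' = "matrix_inv g"
  have g': "?g' \<in> G" using compact_matrix_group_matrix_inv[OF G g] .
  have unitary: "(\<Sum>c<d. cnj (\<pi> g c a) * \<pi> g c f) = (if a = f then 1 else 0)" if "f < d" for f
    using \<pi> g a that unfolding unitary_rep_def by blast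
  have right_inverse: "(\<Sum>f<d. \<pi> g c f * \<pi> ?g' f b) = (if c = b then 1 else 0)" if c: "c < d" for c
  proof -
    have "(\<Sum>f<d. \<pi> g c f * \<pi> ?g' f b) = \<pi> (g ** ?g') c b"
      using unitary_rep_mult[OF \<pi> g g' c b] by simp
    also have "\<dots> = (if c = b then 1 else 0)"
      using \<pi> c b matrix_mul_matrix_inv[OF compact_matrix_group_invertible[OF G g]]
      unfolding unitary_rep_def by simp
    finally show ?thesis .
  qed
  have "cnj (\<pi> g b a) = (\<Sum>c<d. cnj (\<pi> g c a) * (\<Sum>f<d. \<pi> g c f * \<pi> ?g' f b))"
    using b by (simp add: right_inverse if_distrib sum.delta cong: if_cong)
  also have "\<dots> = (\<Sum>f<d. (\<Sum>c<d. cnj (\<pi> g c a) * \<pi> g c f) * \<pi> ?g' f b)"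
    by (simp add: sum_distrib_left sum_distrib_right mult.assoc) (rule sum.swap)
  also have "\<dots> = \<pi> ?g' a b"
    using a by (simp add: unitary if_distrib[of "\<lambda>x. x * _"] cong: if_cong)
  finally show ?thesis by simp
qed

lemma unitary_rep_left_translate:
  assumes G: "compact_matrix_group G" and \<pi>: "unitary_rep G d \<pi>" and "h \<in> G" "g \<in> G"
    and "a < d" "b < d"
  shows "\<pi> (matrix_inv h ** g) a b = (\<Sum>c<d. cnj (\<pi> h c a) * \<pi> g c b)"
  using assms compact_matrix_group_matrix_inv[OF G]
  by (simp add: unitary_rep_mult[OF \<pi>] unitary_rep_matrix_inv[OF G \<pi>])

lemma unitary_rep_entry_norm_le:
  assumes \<pi>: "unitary_rep G d \<pi>" and g: "g \<in> G" and a: "a < d" and b: "b < d"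
  shows "norm (\<pi> g a b) \<le> 1"
proof -
  have "complex_of_real (\<Sum>c<d. (norm (\<pi> g c b))\<^sup>2) = (\<Sum>c<d. cnj (\<pi> g c b) * \<pi> g c b)"
    by (simp add: complex_norm_square mult.commute del: of_real_power)
  also have "\<dots> = 1"
    using \<pi> g b unfolding unitary_rep_def by auto
  finally have "(\<Sum>c<d. (norm (\<pi> g c b))\<^sup>2) = 1"
    using of_real_eq_1_iff by blast
  moreover have "(norm (\<pi> g a b))\<^sup>2 \<le> (\<Sum>c<d. (norm (\<pi> g c b))\<^sup>2)"
    using a by (intro member_le_sum) auto
  ultimately show ?thesis
    by (simp add: power_le_one_iff)
qed

lemma character_left_translate:
  assumes "compact_matrix_group G" "unitary_rep G d \<pi>" "h \<in> G" "g \<in> G"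
  shows "character d \<pi> (matrix_inv h ** g) = (\<Sum>(p,q)\<in>{..<d}\<times>{..<d}. cnj (\<pi> h p q) * \<pi> g p q)"
proof -
  have "character d \<pi> (matrix_inv h ** g) = (\<Sum>q<d. \<Sum>p<d. cnj (\<pi> h p q) * \<pi> g p q)"
    unfolding character_def using assms by (simp add: unitary_rep_left_translate)
  also have "\<dots> = (\<Sum>p<d. \<Sum>q<d. cnj (\<pi> h p q) * \<pi> g p q)"
    by (rule sum.swap)
  finally show ?thesis
    by (simp add: sum.cartesian_product)
qed

lemma character_mult_matrix_inv:
  assumes G: "compact_matrix_group G" and \<pi>: "unitary_rep G d \<pi>" and "x \<in> G" "y \<in> G"
  shows "character d \<pi> (x ** matrix_inv y) = (\<Sum>a<d. \<Sum>c<d. \<pi> x a c * cnj (\<pi> y a c))"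
  unfolding character_def using assms compact_matrix_group_matrix_inv[OF G]
  by (simp add: unitary_rep_mult[OF \<pi>] unitary_rep_matrix_inv[OF G \<pi>])

text \<open>The inner sums on the right are the entries of \<open>\<pi>(h\<^sub>1) \<pi>(h\<^sub>2)\<^sup>* = \<pi>(h\<^sub>1 h\<^sub>2\<^sup>-\<^sup>1)\<close>
  and \<open>\<pi>(g\<^sub>1) \<pi>(g\<^sub>2)\<^sup>*\<close>.\<close>
lemma character_quotient_left_translate:
  assumes G: "compact_matrix_group G" and \<pi>: "unitary_rep G d \<pi>"
    and h\<^sub>1: "h\<^sub>1 \<in> G" and g\<^sub>1: "g\<^sub>1 \<in> G" and h\<^sub>2: "h\<^sub>2 \<in> G" and g\<^sub>2: "g\<^sub>2 \<in> G"
  shows "character d \<pi> ((matrix_inv h\<^sub>1 ** g\<^sub>1) ** matrix_inv (matrix_inv h\<^sub>2 ** g\<^sub>2))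
    = (\<Sum>(p,q)\<in>{..<d}\<times>{..<d}. cnj (\<Sum>c<d. \<pi> h\<^sub>1 p c * cnj (\<pi> h\<^sub>2 q c))
                                * (\<Sum>c<d. \<pi> g\<^sub>1 p c * cnj (\<pi> g\<^sub>2 q c)))"
proof -
  have "matrix_inv h\<^sub>1 ** g\<^sub>1 \<in> G" "matrix_inv h\<^sub>2 ** g\<^sub>2 \<in> G"
    using assms by (simp_all add: compact_matrix_group_mult compact_matrix_group_matrix_inv)
  then have "character d \<pi> ((matrix_inv h\<^sub>1 ** g\<^sub>1) ** matrix_inv (matrix_inv h\<^sub>2 ** g\<^sub>2))
    = (\<Sum>a<d. \<Sum>c<d. (\<Sum>p<d. cnj (\<pi> h\<^sub>1 p a) * \<pi> g\<^sub>1 p c) * cnj (\<Sum>q<d. cnj (\<pi> h\<^sub>2 q a) * \<pi> g\<^sub>2 q c))"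
    by (simp add: character_mult_matrix_inv[OF G \<pi>] unitary_rep_left_translate[OF G \<pi>] assms)
  then show ?thesis
    by (simp only: trace_adjoint_products)
qed

definition bounded_measurable :: "'a measure \<Rightarrow> ('a \<Rightarrow> complex) \<Rightarrow> bool" where
  "bounded_measurable M f \<longleftrightarrow> f \<in> borel_measurable M \<and> (\<exists>B. \<forall>x\<in>space M. norm (f x) \<le> B)"

lemma bounded_measurable_cong:
  "(\<And>x. x \<in> space M \<Longrightarrow> f x = g x) \<Longrightarrow> bounded_measurable M f \<longleftrightarrow> bounded_measurable M g"
  unfolding bounded_measurable_def by (simp cong: measurable_cong)

lemma bounded_measurable_const: "bounded_measurable M (\<lambda>_. c)"
  unfolding bounded_measurable_def by auto

lemma bounded_measurable_mult:
  assumes "bounded_measurable M f" "bounded_measurable M g"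
  shows "bounded_measurable M (\<lambda>x. f x * g x)"
proof -
  obtain B C where "\<forall>x\<in>space M. norm (f x) \<le> B" "\<forall>x\<in>space M. norm (g x) \<le> C"
    using assms unfolding bounded_measurable_def by blast
  then have "\<forall>x\<in>space M. norm (f x * g x) \<le> B * C"
    by (simp add: norm_mult mult_mono')
  with assms show ?thesis
    unfolding bounded_measurable_def by auto
qed

lemma bounded_measurable_add:
  assumes "bounded_measurable M f" "bounded_measurable M g"
  shows "bounded_measurable M (\<lambda>x. f x + g x)"
proof -
  obtain B C where "\<forall>x\<in>space M. norm (f x) \<le> B" "\<forall>x\<in>space M. norm (g x) \<le> C"
    using assms unfolding bounded_measurable_def by blast
  then have "\<forall>x\<in>space M. norm (f x + g x) \<le> B + C"
    by (metis add_mono norm_triangle_le)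
  with assms show ?thesis
    unfolding bounded_measurable_def by auto
qed

lemma bounded_measurable_cnj: "bounded_measurable M f \<Longrightarrow> bounded_measurable M (\<lambda>x. cnj (f x))"
  unfolding bounded_measurable_def
  by (auto intro: borel_measurable_continuous_on[where f = cnj] continuous_intros)

lemma bounded_measurable_sum:
  "finite S \<Longrightarrow> (\<And>s. s \<in> S \<Longrightarrow> bounded_measurable M (f s)) \<Longrightarrow> bounded_measurable M (\<lambda>x. \<Sum>s\<in>S. f s x)"
  by (induction S rule: finite_induct) (auto intro: bounded_measurable_add bounded_measurable_const)

lemma bounded_measurable_prod:
  "finite S \<Longrightarrow> (\<And>s. s \<in> S \<Longrightarrow> bounded_measurable M (f s)) \<Longrightarrow> bounded_measurable M (\<lambda>x. \<Prod>s\<in>S. f s x)"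
  by (induction S rule: finite_induct) (auto intro: bounded_measurable_mult bounded_measurable_const)

lemma bounded_measurable_integrable:
  "finite_measure M \<Longrightarrow> bounded_measurable M f \<Longrightarrow> integrable M f"
  unfolding bounded_measurable_def by (auto intro: finite_measure.integrable_const_bound)

lemma integral_quadratic_form:
  fixes v :: "'i \<Rightarrow> complex"
  assumes A: "finite A" and P: "\<And>a b. a \<in> A \<Longrightarrow> b \<in> A \<Longrightarrow> integrable M (P a b)"
  shows "(\<Sum>a\<in>A. \<Sum>b\<in>A. cnj (v a) * integral\<^sup>L M (P a b) * v b)
       = (\<integral>g. (\<Sum>a\<in>A. \<Sum>b\<in>A. cnj (v a) * P a b g * v b) \<partial>M)"
  using A P by (simp add: Bochner_Integration.integral_sum integrable_sum)

section \<open>Gram kernels\<close>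

definition gram_kernel :: "'a measure \<Rightarrow> ('a \<Rightarrow> 'a \<Rightarrow> complex) \<Rightarrow> bool" where
  "gram_kernel M K \<longleftrightarrow> (\<exists>n::nat. \<exists>u. (\<forall>x<n. bounded_measurable M (u x)) \<and>
     (\<forall>h\<in>space M. \<forall>g\<in>space M. K h g = (\<Sum>x<n. cnj (u x h) * u x g)))"

lemma gram_kernelI:
  assumes X: "finite X" and u: "\<And>x. x \<in> X \<Longrightarrow> bounded_measurable M (u x)"
    and K: "\<And>h g. h \<in> space M \<Longrightarrow> g \<in> space M \<Longrightarrow> K h g = (\<Sum>x\<in>X. cnj (u x h) * u x g)"
  shows "gram_kernel M K"
proof -
  obtain e where e: "bij_betw e {..<card X} X"
    using ex_bij_betw_nat_finite[OF X] by (auto simp: lessThan_atLeast0)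
  have "K h g = (\<Sum>x<card X. cnj (u (e x) h) * u (e x) g)" if "h \<in> space M" "g \<in> space M" for h g
    using K[OF that] sum.reindex_bij_betw[OF e, of "\<lambda>x. cnj (u x h) * u x g"] by simp
  moreover have "bounded_measurable M (u (e x))" if "x < card X" for x
    using u bij_betwE[OF e] that by blast
  ultimately show ?thesis
    unfolding gram_kernel_def by (intro exI[of _ "card X"] exI[of _ "\<lambda>x. u (e x)"]) auto
qed

lemma gram_kernel_one: "gram_kernel M (\<lambda>_ _. 1)"
  by (rule gram_kernelI[where X = "{()}" and u = "\<lambda>_ _. 1"]) (simp_all add: bounded_measurable_const)

lemma gram_kernel_mult:
  assumes "gram_kernel M K" "gram_kernel M L"
  shows "gram_kernel M (\<lambda>h g. K h g * L h g)"
proof -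
  obtain n :: nat and u where u: "\<forall>x<n. bounded_measurable M (u x)"
    and K: "\<forall>h\<in>space M. \<forall>g\<in>space M. K h g = (\<Sum>x<n. cnj (u x h) * u x g)"
    using assms(1) unfolding gram_kernel_def by blast
  obtain m :: nat and w where w: "\<forall>y<m. bounded_measurable M (w y)"
    and L: "\<forall>h\<in>space M. \<forall>g\<in>space M. L h g = (\<Sum>y<m. cnj (w y h) * w y g)"
    using assms(2) unfolding gram_kernel_def by blast
  show ?thesis
  proof (rule gram_kernelI[where X = "{..<n} \<times> {..<m}" and u = "\<lambda>(x,y) g. u x g * w y g"])
    show "bounded_measurable M (case p of (x, y) \<Rightarrow> \<lambda>g. u x g * w y g)" if "p \<in> {..<n} \<times> {..<m}" for p
      using that u w by (auto intro: bounded_measurable_mult)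
    show "K h g * L h g = (\<Sum>p\<in>{..<n} \<times> {..<m}. cnj ((case p of (x, y) \<Rightarrow> \<lambda>g. u x g * w y g) h)
                                    * (case p of (x, y) \<Rightarrow> \<lambda>g. u x g * w y g) g)"
      if "h \<in> space M" "g \<in> space M" for h g
      using that K L by (simp add: sum_product sum.cartesian_product case_prod_beta mult_ac)
  qed simp
qed

lemma gram_kernel_prod:
  "finite I \<Longrightarrow> (\<And>i. i \<in> I \<Longrightarrow> gram_kernel M (K i)) \<Longrightarrow> gram_kernel M (\<lambda>h g. \<Prod>i\<in>I. K i h g)"
  by (induction I rule: finite_induct) (simp_all add: gram_kernel_one gram_kernel_mult)

lemma gram_kernel_double_integral_nonneg:
  assumes M: "finite_measure M" and "gram_kernel M K"
  shows "0 \<le> (\<integral>h. (\<integral>g. K h g \<partial>M) \<partial>M)"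
proof -
  obtain n :: nat and u where u: "\<forall>x<n. bounded_measurable M (u x)"
    and K: "\<forall>h\<in>space M. \<forall>g\<in>space M. K h g = (\<Sum>x<n. cnj (u x h) * u x g)"
    using assms(2) unfolding gram_kernel_def by blast
  have int: "integrable M (u x)" if "x < n" for x
    using u that bounded_measurable_integrable[OF M] by blast
  have "(\<integral>h. (\<integral>g. K h g \<partial>M) \<partial>M) = (\<integral>h. (\<Sum>x<n. cnj (u x h) * integral\<^sup>L M (u x)) \<partial>M)"
  proof (rule Bochner_Integration.integral_cong[OF refl])
    fix h assume h: "h \<in> space M"
    have "(\<integral>g. K h g \<partial>M) = (\<integral>g. (\<Sum>x<n. cnj (u x h) * u x g) \<partial>M)"
      using K h by (intro Bochner_Integration.integral_cong) auto
    also have "\<dots> = (\<Sum>x<n. cnj (u x h) * integral\<^sup>L M (u x))"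
      using int by (subst Bochner_Integration.integral_sum) auto
    finally show "(\<integral>g. K h g \<partial>M) = (\<Sum>x<n. cnj (u x h) * integral\<^sup>L M (u x))" .
  qed
  also have "\<dots> = (\<Sum>x<n. cnj (integral\<^sup>L M (u x)) * integral\<^sup>L M (u x))"
    using int by (subst Bochner_Integration.integral_sum) auto
  also have "0 \<le> \<dots>"
    by (intro sum_nonneg) (simp add: less_eq_complex_def)
  finally show ?thesis .
qed

section \<open>Products of Haar measures and left translation\<close>

lemma space_haar_measure: "haar_measure G \<mu> \<Longrightarrow> space \<mu> = G"
  unfolding haar_measure_def by blast

lemma prob_space_haar_measure: "haar_measure G \<mu> \<Longrightarrow> prob_space \<mu>"
  unfolding haar_measure_def by (intro prob_spaceI) auto

lemma measurable_haar_measure_continuous: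
  assumes "haar_measure G \<mu>" "continuous_on G f"
  shows "f \<in> borel_measurable \<mu>"
proof -
  have "sets \<mu> = sets (restrict_space borel G)"
    using assms(1) unfolding haar_measure_def by blast
  then show ?thesis
    using borel_measurable_continuous_on_restrict[OF assms(2)] by (simp cong: measurable_cong_sets)
qed

lemma measurable_haar_measure_left_mult:
  fixes a :: "complex^'n^'n"
  assumes "haar_measure G \<mu>" "\<And>x. x \<in> G \<Longrightarrow> a ** x \<in> G"
  shows "(\<lambda>x. a ** x) \<in> measurable \<mu> \<mu>"
proof -
  have sets: "sets \<mu> = sets (restrict_space borel G)"
    using assms(1) unfolding haar_measure_def by blast
  have "continuous_on UNIV (\<lambda>x::complex^'n^'n. a ** x)"
    unfolding matrix_matrix_mult_def by (intro continuous_intros)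
  then show ?thesis
    unfolding measurable_cong_sets[OF sets sets]
    by (intro measurable_restrict_space3[OF borel_measurable_continuous_onI]) (use assms(2) in auto)
qed

lemma measurable_PiM_componentwise:
  assumes "\<And>i. i \<in> I \<Longrightarrow> f i \<in> measurable N N"
  shows "(\<lambda>x. \<lambda>i\<in>I. f i (x i)) \<in> measurable (PiM I (\<lambda>_. N)) (PiM I (\<lambda>_. N))"
proof (rule measurable_restrict)
  fix i assume i: "i \<in> I"
  show "(\<lambda>x. f i (x i)) \<in> measurable (PiM I (\<lambda>_. N)) N"
    by (rule measurable_compose[OF measurable_component_singleton[OF i] assms[OF i]])
qed

lemma distr_PiM_componentwise:
  assumes I: "finite I" and N: "prob_space N"
    and meas: "\<And>i. i \<in> I \<Longrightarrow> f i \<in> measurable N N"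
    and distr: "\<And>i. i \<in> I \<Longrightarrow> distr N N (f i) = N"
  shows "distr (PiM I (\<lambda>_. N)) (PiM I (\<lambda>_. N)) (\<lambda>x. \<lambda>i\<in>I. f i (x i)) = PiM I (\<lambda>_. N)"
proof -
  interpret N: prob_space N by fact
  interpret P: product_sigma_finite "\<lambda>_. N"
    by (simp add: product_sigma_finite_def N.sigma_finite_measure_axioms)
  let ?T = "\<lambda>x. \<lambda>i\<in>I. f i (x i)"
  show ?thesis
  proof (rule P.PiM_eqI[OF I])
    fix A assume A: "\<And>i. i \<in> I \<Longrightarrow> A i \<in> sets N"
    have "?T -` PiE I A \<inter> space (PiM I (\<lambda>_. N)) = PiE I (\<lambda>i. f i -` A i \<inter> space N)"
      by (auto simp: space_PiM PiE_def Pi_def extensional_def)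
    then have "emeasure (distr (PiM I (\<lambda>_. N)) (PiM I (\<lambda>_. N)) ?T) (PiE I A)
        = emeasure (PiM I (\<lambda>_. N)) (PiE I (\<lambda>i. f i -` A i \<inter> space N))"
      using A I by (simp add: emeasure_distr measurable_PiM_componentwise meas sets_PiM_I_finite)
    also have "\<dots> = (\<Prod>i\<in>I. emeasure (distr N N (f i)) (A i))"
      using A meas by (simp add: P.emeasure_PiM[OF I] emeasure_distr measurable_sets)
    finally show "emeasure (distr (PiM I (\<lambda>_. N)) (PiM I (\<lambda>_. N)) ?T) (PiE I A) = (\<Prod>i\<in>I. emeasure N (A i))"
      by (simp add: distr)
  qed simp
qed

lemma integral_eq_double_integral_translate:
  fixes F :: "'a \<Rightarrow> 'b::{banach, second_countable_topology}"
  assumes "prob_space M" and F: "F \<in> borel_measurable M"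
    and T: "\<And>h. h \<in> space M \<Longrightarrow> T h \<in> measurable M M"
    and distr: "\<And>h. h \<in> space M \<Longrightarrow> distr M M (T h) = M"
  shows "integral\<^sup>L M F = (\<integral>h. (\<integral>g. F (T h g) \<partial>M) \<partial>M)"
proof -
  interpret prob_space M by fact
  have "(\<integral>g. F (T h g) \<partial>M) = integral\<^sup>L M F" if "h \<in> space M" for h
    using integral_distr[OF T[OF that] F] distr[OF that] by simp
  then show ?thesis
    by (simp add: prob_space cong: Bochner_Integration.integral_cong)
qed

lemma PiM_haar_measure_component:
  "haar_measure G \<mu> \<Longrightarrow> g \<in> space (PiM I (\<lambda>_. \<mu>)) \<Longrightarrow> i \<in> I \<Longrightarrow> g i \<in> G"
  by (auto simp: space_PiM space_haar_measure)

definition left_translate :: "'i set \<Rightarrow> ('i \<Rightarrow> 'a::semiring_1^'n^'n) \<Rightarrow> ('i \<Rightarrow> 'a^'n^'n) \<Rightarrow> 'i \<Rightarrow> 'a^'n^'n" where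
  "left_translate I h g = (\<lambda>i\<in>I. matrix_inv (h i) ** g i)"

lemma left_translate_apply: "i \<in> I \<Longrightarrow> left_translate I h g i = matrix_inv (h i) ** g i"
  by (simp add: left_translate_def)

lemma PiM_haar_left_translate:
  assumes G: "compact_matrix_group G" and \<mu>: "haar_measure G \<mu>" and I: "finite I"
    and h: "h \<in> space (PiM I (\<lambda>_. \<mu>))"
  shows "left_translate I h \<in> measurable (PiM I (\<lambda>_. \<mu>)) (PiM I (\<lambda>_. \<mu>))"
    and "distr (PiM I (\<lambda>_. \<mu>)) (PiM I (\<lambda>_. \<mu>)) (left_translate I h) = PiM I (\<lambda>_. \<mu>)"
proof -
  have inv: "matrix_inv (h i) \<in> G" if "i \<in> I" for i
    using compact_matrix_group_matrix_inv[OF G PiM_haar_measure_component[OF \<mu> h that]] .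
  have meas: "(\<lambda>x. matrix_inv (h i) ** x) \<in> measurable \<mu> \<mu>" if "i \<in> I" for i
    using measurable_haar_measure_left_mult[OF \<mu>] compact_matrix_group_mult[OF G inv[OF that]] by blast
  show "left_translate I h \<in> measurable (PiM I (\<lambda>_. \<mu>)) (PiM I (\<lambda>_. \<mu>))"
    unfolding left_translate_def[abs_def] using meas by (rule measurable_PiM_componentwise)
  show "distr (PiM I (\<lambda>_. \<mu>)) (PiM I (\<lambda>_. \<mu>)) (left_translate I h) = PiM I (\<lambda>_. \<mu>)"
    unfolding left_translate_def[abs_def] using I prob_space_haar_measure[OF \<mu>] meas
  proof (rule distr_PiM_componentwise)
    show "distr \<mu> \<mu> (\<lambda>x. matrix_inv (h i) ** x) = \<mu>" if "i \<in> I" for i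
      using \<mu> inv[OF that] unfolding haar_measure_def by blast
  qed
qed

lemma bounded_measurable_PiM_rep_entry:
  assumes \<mu>: "haar_measure G \<mu>" and \<pi>: "unitary_rep G d \<pi>" and i: "i \<in> I" and "a < d" "b < d"
  shows "bounded_measurable (PiM I (\<lambda>_. \<mu>)) (\<lambda>g. \<pi> (g i) a b)"
  unfolding bounded_measurable_def
proof (intro conjI exI ballI)
  have "continuous_on G (\<lambda>g. \<pi> g a b)"
    using \<pi> \<open>a < d\<close> \<open>b < d\<close> unfolding unitary_rep_def by blast
  then show "(\<lambda>g. \<pi> (g i) a b) \<in> borel_measurable (PiM I (\<lambda>_. \<mu>))"
    by (intro measurable_compose[OF measurable_component_singleton[OF i]] measurable_haar_measure_continuous[OF \<mu>])
  fix g assume "g \<in> space (PiM I (\<lambda>_. \<mu>))"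
  then have "g i \<in> G"
    using PiM_haar_measure_component[OF \<mu> _ i] by blast
  then show "norm (\<pi> (g i) a b) \<le> 1"
    using unitary_rep_entry_norm_le[OF \<pi>] assms by blast
qed

lemma bounded_measurable_PiM_character:
  assumes \<mu>: "haar_measure G \<mu>" and \<pi>: "unitary_rep G d \<pi>" and i: "i \<in> I"
  shows "bounded_measurable (PiM I (\<lambda>_. \<mu>)) (\<lambda>g. character d \<pi> (g i))"
  unfolding character_def
  by (intro bounded_measurable_sum finite_lessThan bounded_measurable_PiM_rep_entry[OF \<mu> \<pi> i]) auto

lemma bounded_measurable_PiM_character_quotient:
  assumes G: "compact_matrix_group G" and \<mu>: "haar_measure G \<mu>" and \<pi>: "unitary_rep G d \<pi>"
    and i: "i \<in> I" and j: "j \<in> I"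
  shows "bounded_measurable (PiM I (\<lambda>_. \<mu>)) (\<lambda>g. character d \<pi> (g i ** matrix_inv (g j)))"
proof -
  have "bounded_measurable (PiM I (\<lambda>_. \<mu>)) (\<lambda>g. \<Sum>a<d. \<Sum>c<d. \<pi> (g i) a c * cnj (\<pi> (g j) a c))"
    by (intro bounded_measurable_sum bounded_measurable_mult bounded_measurable_cnj finite_lessThan
        bounded_measurable_PiM_rep_entry[OF \<mu> \<pi>] i j) auto
  moreover have "character d \<pi> (g i ** matrix_inv (g j)) = (\<Sum>a<d. \<Sum>c<d. \<pi> (g i) a c * cnj (\<pi> (g j) a c))"
    if "g \<in> space (PiM I (\<lambda>_. \<mu>))" for g
    using that i j by (auto intro: character_mult_matrix_inv[OF G \<pi>] PiM_haar_measure_component[OF \<mu>])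
  ultimately show ?thesis
    by (simp cong: bounded_measurable_cong)
qed

lemma gram_kernel_character_left_translate:
  assumes G: "compact_matrix_group G" and \<mu>: "haar_measure G \<mu>" and \<pi>: "unitary_rep G d \<pi>"
    and i: "i \<in> I"
  shows "gram_kernel (PiM I (\<lambda>_. \<mu>)) (\<lambda>h g. character d \<pi> (left_translate I h g i))"
proof (rule gram_kernelI[where X = "{..<d} \<times> {..<d}" and u = "\<lambda>(p,q) g. \<pi> (g i) p q"])
  show "bounded_measurable (PiM I (\<lambda>_. \<mu>)) (case pq of (p, q) \<Rightarrow> \<lambda>g. \<pi> (g i) p q)"
    if "pq \<in> {..<d} \<times> {..<d}" for pq
    using that bounded_measurable_PiM_rep_entry[OF \<mu> \<pi> i] by auto
  show "character d \<pi> (left_translate I h g i)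
      = (\<Sum>pq\<in>{..<d} \<times> {..<d}. cnj ((case pq of (p, q) \<Rightarrow> \<lambda>g. \<pi> (g i) p q) h)
                                * (case pq of (p, q) \<Rightarrow> \<lambda>g. \<pi> (g i) p q) g)"
    if "h \<in> space (PiM I (\<lambda>_. \<mu>))" "g \<in> space (PiM I (\<lambda>_. \<mu>))" for h g
  proof -
    have "h i \<in> G" "g i \<in> G"
      using that i by (auto intro: PiM_haar_measure_component[OF \<mu>])
    then show ?thesis
      by (simp add: i left_translate_apply character_left_translate[OF G \<pi>] case_prod_beta)
  qed
qed simp

lemma gram_kernel_character_quotient_left_translate:
  assumes G: "compact_matrix_group G" and \<mu>: "haar_measure G \<mu>" and \<pi>: "unitary_rep G d \<pi>"
    and i: "i \<in> I" and j: "j \<in> I"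
  shows "gram_kernel (PiM I (\<lambda>_. \<mu>))
    (\<lambda>h g. character d \<pi> (left_translate I h g i ** matrix_inv (left_translate I h g j)))"
proof (rule gram_kernelI[where X = "{..<d} \<times> {..<d}"
      and u = "\<lambda>(p,q) g. \<Sum>c<d. \<pi> (g i) p c * cnj (\<pi> (g j) q c)"])
  show "bounded_measurable (PiM I (\<lambda>_. \<mu>)) (case pq of (p, q) \<Rightarrow> \<lambda>g. \<Sum>c<d. \<pi> (g i) p c * cnj (\<pi> (g j) q c))"
    if "pq \<in> {..<d} \<times> {..<d}" for pq
    using that bounded_measurable_PiM_rep_entry[OF \<mu> \<pi>] i j
    by (auto intro!: bounded_measurable_sum bounded_measurable_mult bounded_measurable_cnj)
  show "character d \<pi> (left_translate I h g i ** matrix_inv (left_translate I h g j))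
      = (\<Sum>pq\<in>{..<d} \<times> {..<d}. cnj ((case pq of (p, q) \<Rightarrow> \<lambda>g. \<Sum>c<d. \<pi> (g i) p c * cnj (\<pi> (g j) q c)) h)
                                * (case pq of (p, q) \<Rightarrow> \<lambda>g. \<Sum>c<d. \<pi> (g i) p c * cnj (\<pi> (g j) q c)) g)"
    if "h \<in> space (PiM I (\<lambda>_. \<mu>))" "g \<in> space (PiM I (\<lambda>_. \<mu>))" for h g
  proof -
    have "h i \<in> G" "g i \<in> G" "h j \<in> G" "g j \<in> G"
      using that i j by (auto intro: PiM_haar_measure_component[OF \<mu>])
    then show ?thesis
      by (simp add: i j left_translate_apply character_quotient_left_translate[OF G \<pi>] case_prod_beta)
  qed
qed simp

definition character_weight ::
  "nat \<Rightarrow> (nat \<Rightarrow> nat) \<Rightarrow> (nat \<Rightarrow> complex^'n^'n \<Rightarrow> nat \<Rightarrow> nat \<Rightarrow> complex) \<Rightarrow>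
   (nat \<Rightarrow> nat \<Rightarrow> nat) \<Rightarrow> (nat \<Rightarrow> nat \<Rightarrow> complex^'n^'n \<Rightarrow> nat \<Rightarrow> nat \<Rightarrow> complex) \<Rightarrow>
   (nat \<Rightarrow> complex^'n^'n) \<Rightarrow> complex" where
  "character_weight k d\<alpha> \<alpha> d\<rho> \<rho> g =
     (\<Prod>i<k. character (d\<alpha> i) (\<alpha> i) (g i)) *
     (\<Prod>(i,j)\<in>{(i,j). i < j \<and> j < k}. character (d\<rho> i j) (\<rho> i j) (g i ** matrix_inv (g j)))"

definition tensor_rep_entry ::
  "nat \<Rightarrow> (nat \<Rightarrow> complex^'n^'n \<Rightarrow> nat \<Rightarrow> nat \<Rightarrow> complex) \<Rightarrow>
   (nat \<Rightarrow> complex^'n^'n) \<Rightarrow> (nat \<Rightarrow> nat) \<Rightarrow> (nat \<Rightarrow> nat) \<Rightarrow> complex" where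
  "tensor_rep_entry k \<sigma> g a b = (\<Prod>i<k. \<sigma> i (g i) (a i) (b i))"

lemma Phi_entry_eq_integral:
  "Phi_entry \<mu> k d\<sigma> \<sigma> d\<alpha> \<alpha> d\<rho> \<rho> a b
    = (\<integral>g. character_weight k d\<alpha> \<alpha> d\<rho> \<rho> g * tensor_rep_entry k \<sigma> g a b \<partial>PiM {..<k} (\<lambda>_. \<mu>))"
  unfolding Phi_entry_def character_weight_def tensor_rep_entry_def ..

lemma finite_tensor_indices: "finite (tensor_indices k d)"
  unfolding tensor_indices_def by (intro finite_PiE) auto

lemma finite_pairs_less: "finite {(i, j). i < j \<and> j < (k::nat)}"
  by (rule finite_subset[of _ "{..<k} \<times> {..<k}"]) auto

lemma bounded_measurable_character_weight:
  assumes G: "compact_matrix_group G" and \<mu>: "haar_measure G \<mu>"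
    and \<alpha>: "\<forall>i<k. unitary_rep G (d\<alpha> i) (\<alpha> i)"
    and \<rho>: "\<forall>i j. i < j \<and> j < k \<longrightarrow> unitary_rep G (d\<rho> i j) (\<rho> i j)"
  shows "bounded_measurable (PiM {..<k} (\<lambda>_. \<mu>)) (character_weight k d\<alpha> \<alpha> d\<rho> \<rho>)"
  unfolding character_weight_def[abs_def] using \<alpha> \<rho>
  by (intro bounded_measurable_mult bounded_measurable_prod finite_lessThan finite_pairs_less)
     (auto intro: bounded_measurable_PiM_character[OF \<mu>] bounded_measurable_PiM_character_quotient[OF G \<mu>])

lemma bounded_measurable_tensor_rep_entry:
  assumes \<mu>: "haar_measure G \<mu>" and \<sigma>: "\<forall>i<k. unitary_rep G (d\<sigma> i) (\<sigma> i)"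
    and a: "a \<in> tensor_indices k d\<sigma>" and b: "b \<in> tensor_indices k d\<sigma>"
  shows "bounded_measurable (PiM {..<k} (\<lambda>_. \<mu>)) (\<lambda>g. tensor_rep_entry k \<sigma> g a b)"
  unfolding tensor_rep_entry_def
proof (intro bounded_measurable_prod finite_lessThan)
  show "bounded_measurable (PiM {..<k} (\<lambda>_. \<mu>)) (\<lambda>g. \<sigma> i (g i) (a i) (b i))" if "i \<in> {..<k}" for i
    using that \<sigma> a b by (intro bounded_measurable_PiM_rep_entry[OF \<mu>]) (auto simp: tensor_indices_def)
qed

lemma gram_kernel_character_weight:
  assumes G: "compact_matrix_group G" and \<mu>: "haar_measure G \<mu>"
    and \<alpha>: "\<forall>i<k. unitary_rep G (d\<alpha> i) (\<alpha> i)"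
    and \<rho>: "\<forall>i j. i < j \<and> j < k \<longrightarrow> unitary_rep G (d\<rho> i j) (\<rho> i j)"
  shows "gram_kernel (PiM {..<k} (\<lambda>_. \<mu>))
    (\<lambda>h g. character_weight k d\<alpha> \<alpha> d\<rho> \<rho> (left_translate {..<k} h g))"
  unfolding character_weight_def using \<alpha> \<rho>
  by (intro gram_kernel_mult gram_kernel_prod finite_lessThan finite_pairs_less)
     (auto intro: gram_kernel_character_left_translate[OF G \<mu>]
        gram_kernel_character_quotient_left_translate[OF G \<mu>])

lemma gram_kernel_tensor_quadratic_form:
  assumes G: "compact_matrix_group G" and \<mu>: "haar_measure G \<mu>"
    and \<sigma>: "\<forall>i<k. unitary_rep G (d\<sigma> i) (\<sigma> i)"
  shows "gram_kernel (PiM {..<k} (\<lambda>_. \<mu>)) (\<lambda>h g.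
    \<Sum>a\<in>tensor_indices k d\<sigma>. \<Sum>b\<in>tensor_indices k d\<sigma>.
      cnj (v a) * tensor_rep_entry k \<sigma> (left_translate {..<k} h g) a b * v b)"
proof -
  let ?M = "PiM {..<k} (\<lambda>_. \<mu>)" and ?T = "tensor_indices k d\<sigma>"
  have translate: "tensor_rep_entry k \<sigma> (left_translate {..<k} h g) a b
      = (\<Sum>c\<in>?T. cnj (tensor_rep_entry k \<sigma> h c a) * tensor_rep_entry k \<sigma> g c b)"
    if h: "h \<in> space ?M" and g: "g \<in> space ?M" and a: "a \<in> ?T" and b: "b \<in> ?T" for h g a b
  proof -
    have "tensor_rep_entry k \<sigma> (left_translate {..<k} h g) a b
        = (\<Prod>i<k. \<Sum>c<d\<sigma> i. cnj (\<sigma> i (h i) c (a i)) * \<sigma> i (g i) c (b i))"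
      unfolding tensor_rep_entry_def
    proof (rule prod.cong[OF refl])
      fix i assume i: "i \<in> {..<k}"
      then have "h i \<in> G" "g i \<in> G" "a i < d\<sigma> i" "b i < d\<sigma> i"
        using h g a b by (auto intro: PiM_haar_measure_component[OF \<mu>] simp: tensor_indices_def)
      then show "\<sigma> i (left_translate {..<k} h g i) (a i) (b i)
          = (\<Sum>c<d\<sigma> i. cnj (\<sigma> i (h i) c (a i)) * \<sigma> i (g i) c (b i))"
        using i \<sigma> by (simp add: left_translate_apply unitary_rep_left_translate[OF G])
    qed
    also have "\<dots> = (\<Sum>c\<in>?T. cnj (tensor_rep_entry k \<sigma> h c a) * tensor_rep_entry k \<sigma> g c b)"
      unfolding tensor_rep_entry_def tensor_indices_def by (rule prod_sum_cnj_mult_PiE) auto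
    finally show ?thesis .
  qed
  show ?thesis
  proof (rule gram_kernelI[where X = ?T and u = "\<lambda>c g. \<Sum>b\<in>?T. tensor_rep_entry k \<sigma> g c b * v b"])
    show "bounded_measurable ?M (\<lambda>g. \<Sum>b\<in>?T. tensor_rep_entry k \<sigma> g c b * v b)" if "c \<in> ?T" for c
      using that by (intro bounded_measurable_sum bounded_measurable_mult bounded_measurable_const
          bounded_measurable_tensor_rep_entry[OF \<mu> \<sigma>] finite_tensor_indices)
    show "(\<Sum>a\<in>?T. \<Sum>b\<in>?T. cnj (v a) * tensor_rep_entry k \<sigma> (left_translate {..<k} h g) a b * v b)
      = (\<Sum>c\<in>?T. cnj (\<Sum>b\<in>?T. tensor_rep_entry k \<sigma> h c b * v b) * (\<Sum>b\<in>?T. tensor_rep_entry k \<sigma> g c b * v b))"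
      if "h \<in> space ?M" "g \<in> space ?M" for h g
      using that by (simp add: translate quadratic_form_adjoint_mult cong: sum.cong)
  qed (rule finite_tensor_indices)
qed

theorem theorem1:
  fixes G :: "(complex^'n^'n) set" and \<mu> :: "(complex^'n^'n) measure"
    and k :: nat
    and d\<sigma> d\<alpha> :: "nat \<Rightarrow> nat" and \<sigma> \<alpha> :: "nat \<Rightarrow> complex^'n^'n \<Rightarrow> nat \<Rightarrow> nat \<Rightarrow> complex"
    and d\<rho> :: "nat \<Rightarrow> nat \<Rightarrow> nat" and \<rho> :: "nat \<Rightarrow> nat \<Rightarrow> complex^'n^'n \<Rightarrow> nat \<Rightarrow> nat \<Rightarrow> complex"
    and v :: "(nat \<Rightarrow> nat) \<Rightarrow> complex"
  assumes "compact_matrix_group G"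
    and "haar_measure G \<mu>"
    and "k \<ge> 2"
    and "\<forall>i<k. unitary_rep G (d\<sigma> i) (\<sigma> i)"
    and "\<forall>i<k. unitary_rep G (d\<alpha> i) (\<alpha> i)"
    and "\<forall>i j. i < j \<and> j < k \<longrightarrow> unitary_rep G (d\<rho> i j) (\<rho> i j)"
  shows "Im (\<Sum>a\<in>tensor_indices k d\<sigma>. \<Sum>b\<in>tensor_indices k d\<sigma>.
             cnj (v a) * Phi_entry \<mu> k d\<sigma> \<sigma> d\<alpha> \<alpha> d\<rho> \<rho> a b * v b) = 0
       \<and> Re (\<Sum>a\<in>tensor_indices k d\<sigma>. \<Sum>b\<in>tensor_indices k d\<sigma>.
             cnj (v a) * Phi_entry \<mu> k d\<sigma> \<sigma> d\<alpha> \<alpha> d\<rho> \<rho> a b * v b) \<ge> 0"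
proof -
  note G = assms(1) and \<mu> = assms(2) and \<sigma> = assms(4) and \<alpha>\<rho> = assms(5,6)
  let ?M = "PiM {..<k} (\<lambda>_. \<mu>)" and ?T = "tensor_indices k d\<sigma>"
  define W where "W = character_weight k d\<alpha> \<alpha> d\<rho> \<rho>"
  define F where "F g = W g * (\<Sum>a\<in>?T. \<Sum>b\<in>?T. cnj (v a) * tensor_rep_entry k \<sigma> g a b * v b)" for g
  have M: "prob_space ?M"
    by (intro prob_space_PiM prob_space_haar_measure[OF \<mu>])
  interpret M: prob_space ?M by (rule M)
  have W: "bounded_measurable ?M W"
    unfolding W_def by (rule bounded_measurable_character_weight[OF G \<mu> \<alpha>\<rho>])
  have entry: "bounded_measurable ?M (\<lambda>g. tensor_rep_entry k \<sigma> g a b)" if "a \<in> ?T" "b \<in> ?T" for a b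
    using bounded_measurable_tensor_rep_entry[OF \<mu> \<sigma> that] .
  have "(\<Sum>a\<in>?T. \<Sum>b\<in>?T. cnj (v a) * Phi_entry \<mu> k d\<sigma> \<sigma> d\<alpha> \<alpha> d\<rho> \<rho> a b * v b) = integral\<^sup>L ?M F"
    unfolding Phi_entry_eq_integral W_def[symmetric] F_def
    using finite_tensor_indices W entry M.finite_measure_axioms
    by (subst integral_quadratic_form)
       (auto intro!: bounded_measurable_integrable bounded_measurable_mult simp: sum_distrib_left mult_ac)
  also have "\<dots> = (\<integral>h. (\<integral>g. F (left_translate {..<k} h g) \<partial>?M) \<partial>?M)"
  proof (rule integral_eq_double_integral_translate[OF M])
    have "bounded_measurable ?M F"
      using finite_tensor_indices W entry unfolding F_def[abs_def]
      by (intro bounded_measurable_mult bounded_measurable_sum bounded_measurable_const) auto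
    then show "F \<in> borel_measurable ?M"
      unfolding bounded_measurable_def by blast
  qed (use PiM_haar_left_translate[OF G \<mu>] in auto)
  also have "0 \<le> \<dots>"
    using gram_kernel_mult[OF gram_kernel_character_weight[OF G \<mu> \<alpha>\<rho>] gram_kernel_tensor_quadratic_form[OF G \<mu> \<sigma>]]
    unfolding F_def W_def by (intro gram_kernel_double_integral_nonneg M.finite_measure_axioms)
  finally show ?thesis
    by (simp add: less_eq_complex_def)
qed

end
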